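(* Let $3\le n\le N$. For every $x$ at which all the functions $\Theta_n,\Lambda_n(\cdot;i,k)$ ($i,k\in\{1,2\}$) are defined at both $x+1$ and $x$ and $\Lambda_n(x+1;1,1)\neq0$, $$\widetilde{\mathcal F}_n(x)\,\Delta\nabla\mathbb K_n(x)+\widetilde{\mathcal G}_n(x)\,\Delta\mathbb K_n(x)+\widetilde{\mathcal H}_n(x)\,\mathbb K_n(x)=0,$$ where $\widetilde{\mathcal F}_n(x)=\mathcal F_n(x+1)$, $\widetilde{\mathcal G}_n(x)=\mathcal G_n(x+1)+\mathcal H_n(x+1)$, $\widetilde{\mathcal H}_n(x)=\mathcal H_n(x+1)$, and $\mathcal F_n(x)=\Theta_n(x)\Theta_n(x-1)$, $\mathcal G_n(x)=\Theta_n(x)\big(\nabla\Theta_n(x)+\Lambda_n(x-1;2,1)+\Lambda_n(x;1,2)\big)-\frac{\nabla\Lambda_n(x;1,1)\,(\Theta_n(x)+\Lambda_n(x;1,2))\Theta_n(x)}{\Lambda_n(x;1,1)}$, $\mathcal H_n(x)=\Theta_n(x)\nabla\Lambda_n(x;2,1)+\Lambda_n(x;1,2)\Lambda_n(x;2,1)-\frac{\nabla\Lambda_n(x;1,1)\,\Lambda_n(x;2,1)(\Theta_n(x)+\Lambda_n(x;1,2))}{\Lambda_n(x;1,1)}-\Lambda_n(x-1;1,1)\Lambda_n(x;2,2)$.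
   Context: Fix an integer $N\ge 1$ and $0<p<1$. Notation: $(a)_0=1$, $(a)_k=a(a+1)\cdots(a+k-1)$ (Pochhammer symbol); $[z]_0=1$, $[z]_k=z(z-1)\cdots(z-k+1)$ (falling factorial). For a function $f$, $\Delta f(x)=f(x+1)-f(x)$, $\nabla f(x)=f(x)-f(x-1)$, $\Delta^0$ is the identity and $\Delta^k=\Delta\circ\Delta^{k-1}$. For $0\le n\le N$ the monic Kravchuk polynomial is $K_n(x)=p^n(-N)_n\sum_{k=0}^{n}\frac{(-n)_k(-x)_k}{(-N)_k\,k!}p^{-k}$, and $K_{-1}=0$; these are monic of degree $n$ and orthogonal on $\{0,\dots,N\}$ with respect to the binomial weight $w(x)=\binom{N}{x}p^x(1-p)^{N-x}$, with $\|K_n\|^2=\sum_{x=0}^N K_n(x)^2w(x)=n!(-N)_np^n(p-1)^n$. They satisfy $xK_n=K_{n+1}+\alpha_nK_n+\beta_nK_{n-1}$ with $\alpha_n=p(N-n)+n(1-p)$, $\beta_n=np(1-p)(N-n+1)$. For $1\le n\le N+1$ and integers $i,l\ge0$, $\mathscr K_{n-1}^{(i,l)}(x,y)=\sum_{k=0}^{n-1}\frac{\Delta^iK_k(x)\,\Delta^lK_k(y)}{\|K_k\|^2}$. Fix $\lambda,\mu>0$ and an integer $j\ge 0$. On real polynomials define $\langle f,g\rangle_{\lambda,\mu}=\sum_{x=0}^N f(x)g(x)w(x)+\lambda\Delta^jf(0)\Delta^jg(0)+\mu\Delta^jf(N)\Delta^jg(N)$. For $0\le n\le N$, $\mathbb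 K_n=\mathbb K_n^{(j)}$ is the monic polynomial of degree $n$ with $\langle\mathbb K_n,q\rangle_{\lambda,\mu}=0$ for all polynomials $q$ of degree $<n$ (Kravchuk–Sobolev polynomials). For $1\le n\le N$: $\mathscr A_n(x,y)=\frac{j!}{\|K_{n-1}\|^2[x-y]_{j+1}}\sum_{k=0}^{j}\frac{\Delta^kK_{n-1}(y)}{k!}[x-y]_k$, $\mathscr B_n(x,y)=-\frac{j!}{\|K_{n-1}\|^2[x-y]_{j+1}}\sum_{k=0}^{j}\frac{\Delta^kK_{n}(y)}{k!}[x-y]_k$; $k_{00}=\mathscr K^{(j,j)}_{n-1}(0,0)$, $k_{0N}=\mathscr K^{(j,j)}_{n-1}(0,N)$, $k_{N0}=\mathscr K^{(j,j)}_{n-1}(N,0)$, $k_{NN}=\mathscr K^{(j,j)}_{n-1}(N,N)$, $d_0=\Delta^jK_n(0)$, $d_N=\Delta^jK_n(N)$, $\delta_n=(1+\lambda k_{00})(1+\mu k_{NN})-\lambda\mu k_{0N}k_{N0}$ (which is nonzero), $\Phi_1(n)=\frac{d_0(1+\mu k_{NN})-\mu k_{0N}d_N}{\delta_n}$, $\Phi_2(n)=\frac{(1+\lambda k_{00})d_N-\lambda k_{N0}d_0}{\delta_n}$; $\mathscr C_{1,n}(x)=1-\lambda\Phi_1(n)\mathscr A_n(x,0)-\mu\Phi_2(n)\mathscr A_n(x,N)$ and $\mathscr D_{1,n}(x)=-\lambda\Phi_1(n)\mathscr B_n(x,0)-\mu\Phi_2(n)\mathscr B_n(x,N)$. For $2\le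 m\le N$ define $\mathscr E_{1,m}(x)=x\nabla\mathscr C_{1,m}(x)+m\,\mathscr C_{1,m}(x-1)-\frac{(m-1)p(N-m+2)\mathscr D_{1,m}(x-1)}{\beta_{m-1}}$ and $\mathscr F_{1,m}(x)=x\nabla\mathscr D_{1,m}(x)+mp(N-m+1)\mathscr C_{1,m}(x-1)+\frac{(m-1)p(N-m+2)(x-\alpha_{m-1})\mathscr D_{1,m}(x-1)}{\beta_{m-1}}+(m-1)\mathscr D_{1,m}(x-1)$. For $3\le n\le N$ define $\mathscr C_{2,n}(x)=-\frac{\mathscr D_{1,n-1}(x)}{\beta_{n-1}}$, $\mathscr D_{2,n}(x)=\mathscr C_{1,n-1}(x)+\mathscr C_{2,n}(x)(\alpha_{n-1}-x)$, $\mathscr E_{2,n}(x)=-\frac{\mathscr F_{1,n-1}(x)}{\beta_{n-1}}$, $\mathscr F_{2,n}(x)=\mathscr E_{1,n-1}(x)+\mathscr E_{2,n}(x)(\alpha_{n-1}-x)$, and $\Theta_n(x)=x\big(\mathscr C_{1,n}(x)\mathscr D_{2,n}(x)-\mathscr C_{2,n}(x)\mathscr D_{1,n}(x)\big)$, $\Lambda_n(x;i,k)=(-1)^k\big(\mathscr E_{k,n}(x)\mathscr D_{i,n}(x)-\mathscr F_{k,n}(x)\mathscr C_{i,n}(x)\big)$ for $i,k\in\{1,2\}$. *)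

theory Defs
  imports "HOL-Computational_Algebra.Polynomial"
begin

definition fdiff :: "(real \<Rightarrow> real) \<Rightarrow> real \<Rightarrow> real" where
  "fdiff f x = f (x + 1) - f x"

definition bdiff :: "(real \<Rightarrow> real) \<Rightarrow> real \<Rightarrow> real" where
  "bdiff f x = f x - f (x - 1)"

definition fdiffs :: "nat \<Rightarrow> (real \<Rightarrow> real) \<Rightarrow> real \<Rightarrow> real" where
  "fdiffs k f = (fdiff ^^ k) f"

definition ffall :: "real \<Rightarrow> nat \<Rightarrow> real" where
  "ffall z k = (\<Prod>i<k. z - real i)"

definition bweight :: "nat \<Rightarrow> real \<Rightarrow> nat \<Rightarrow> real" where
  "bweight N p x = real (N choose x) * p ^ x * (1 - p) ^ (N - x)"

definition krav :: "nat \<Rightarrow> real \<Rightarrow> nat \<Rightarrow> real \<Rightarrow> real" where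
  "krav N p n x = p ^ n * pochhammer (- real N) n *
     (\<Sum>k\<le>n. pochhammer (- real n) k * pochhammer (- x) k
              / (pochhammer (- real N) k * fact k) * inverse p ^ k)"

definition knorm2 :: "nat \<Rightarrow> real \<Rightarrow> nat \<Rightarrow> real" where
  "knorm2 N p n = (\<Sum>x\<le>N. (krav N p n (real x))\<^sup>2 * bweight N p x)"

definition kalpha :: "nat \<Rightarrow> real \<Rightarrow> nat \<Rightarrow> real" where
  "kalpha N p n = p * (real N - real n) + real n * (1 - p)"

definition kbeta :: "nat \<Rightarrow> real \<Rightarrow> nat \<Rightarrow> real" where
  "kbeta N p n = real n * p * (1 - p) * (real N - real n + 1)"

text \<open>kker N p m i l x y is the kernel with index m = n-1, i.e. sum over k = 0..m.\<close>
definition kker :: "nat \<Rightarrow> real \<Rightarrow> nat \<Rightarrow> nat \<Rightarrow> nat \<Rightarrow> real \<Rightarrow> real \<Rightarrow> real" where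
  "kker N p m i l x y =
     (\<Sum>k\<le>m. fdiffs i (krav N p k) x * fdiffs l (krav N p k) y / knorm2 N p k)"

definition sip :: "nat \<Rightarrow> real \<Rightarrow> real \<Rightarrow> real \<Rightarrow> nat \<Rightarrow> real poly \<Rightarrow> real poly \<Rightarrow> real" where
  "sip N p lam mu j f g =
     (\<Sum>x\<le>N. poly f (real x) * poly g (real x) * bweight N p x)
     + lam * fdiffs j (poly f) 0 * fdiffs j (poly g) 0
     + mu * fdiffs j (poly f) (real N) * fdiffs j (poly g) (real N)"

definition KS :: "nat \<Rightarrow> real \<Rightarrow> real \<Rightarrow> real \<Rightarrow> nat \<Rightarrow> nat \<Rightarrow> real poly" where
  "KS N p lam mu j n = (THE q. lead_coeff q = 1 \<and> degree q = n \<and>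
       (\<forall>r. degree r < n \<longrightarrow> sip N p lam mu j q r = 0))"

definition Ascr :: "nat \<Rightarrow> real \<Rightarrow> nat \<Rightarrow> nat \<Rightarrow> real \<Rightarrow> real \<Rightarrow> real" where
  "Ascr N p j n x y = fact j / (knorm2 N p (n - 1) * ffall (x - y) (j + 1)) *
     (\<Sum>k\<le>j. fdiffs k (krav N p (n - 1)) y / fact k * ffall (x - y) k)"

definition Bscr :: "nat \<Rightarrow> real \<Rightarrow> nat \<Rightarrow> nat \<Rightarrow> real \<Rightarrow> real \<Rightarrow> real" where
  "Bscr N p j n x y = - (fact j / (knorm2 N p (n - 1) * ffall (x - y) (j + 1))) *
     (\<Sum>k\<le>j. fdiffs k (krav N p n) y / fact k * ffall (x - y) k)"

definition deltaS :: "nat \<Rightarrow> real \<Rightarrow> real \<Rightarrow> real \<Rightarrow> nat \<Rightarrow> nat \<Rightarrow> real" where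
  "deltaS N p lam mu j n =
     (1 + lam * kker N p (n - 1) j j 0 0) * (1 + mu * kker N p (n - 1) j j (real N) (real N))
     - lam * mu * kker N p (n - 1) j j 0 (real N) * kker N p (n - 1) j j (real N) 0"

definition Phi1 :: "nat \<Rightarrow> real \<Rightarrow> real \<Rightarrow> real \<Rightarrow> nat \<Rightarrow> nat \<Rightarrow> real" where
  "Phi1 N p lam mu j n =
     (fdiffs j (krav N p n) 0 * (1 + mu * kker N p (n - 1) j j (real N) (real N))
      - mu * kker N p (n - 1) j j 0 (real N) * fdiffs j (krav N p n) (real N))
     / deltaS N p lam mu j n"

definition Phi2 :: "nat \<Rightarrow> real \<Rightarrow> real \<Rightarrow> real \<Rightarrow> nat \<Rightarrow> nat \<Rightarrow> real" where
  "Phi2 N p lam mu j n =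
     ((1 + lam * kker N p (n - 1) j j 0 0) * fdiffs j (krav N p n) (real N)
      - lam * kker N p (n - 1) j j (real N) 0 * fdiffs j (krav N p n) 0)
     / deltaS N p lam mu j n"

definition C1 :: "nat \<Rightarrow> real \<Rightarrow> real \<Rightarrow> real \<Rightarrow> nat \<Rightarrow> nat \<Rightarrow> real \<Rightarrow> real" where
  "C1 N p lam mu j n x = 1 - lam * Phi1 N p lam mu j n * Ascr N p j n x 0
                           - mu * Phi2 N p lam mu j n * Ascr N p j n x (real N)"

definition D1 :: "nat \<Rightarrow> real \<Rightarrow> real \<Rightarrow> real \<Rightarrow> nat \<Rightarrow> nat \<Rightarrow> real \<Rightarrow> real" where
  "D1 N p lam mu j n x = - lam * Phi1 N p lam mu j n * Bscr N p j n x 0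
                         - mu * Phi2 N p lam mu j n * Bscr N p j n x (real N)"

definition E1 :: "nat \<Rightarrow> real \<Rightarrow> real \<Rightarrow> real \<Rightarrow> nat \<Rightarrow> nat \<Rightarrow> real \<Rightarrow> real" where
  "E1 N p lam mu j m x =
     x * bdiff (C1 N p lam mu j m) x + real m * C1 N p lam mu j m (x - 1)
     - (real m - 1) * p * (real N - real m + 2) * D1 N p lam mu j m (x - 1) / kbeta N p (m - 1)"

definition F1 :: "nat \<Rightarrow> real \<Rightarrow> real \<Rightarrow> real \<Rightarrow> nat \<Rightarrow> nat \<Rightarrow> real \<Rightarrow> real" where
  "F1 N p lam mu j m x =
     x * bdiff (D1 N p lam mu j m) x
     + real m * p * (real N - real m + 1) * C1 N p lam mu j m (x - 1)
     + (real m - 1) * p * (real N - real m + 2) * (x - kalpha N p (m - 1))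
         * D1 N p lam mu j m (x - 1) / kbeta N p (m - 1)
     + (real m - 1) * D1 N p lam mu j m (x - 1)"

definition C2 :: "nat \<Rightarrow> real \<Rightarrow> real \<Rightarrow> real \<Rightarrow> nat \<Rightarrow> nat \<Rightarrow> real \<Rightarrow> real" where
  "C2 N p lam mu j n x = - D1 N p lam mu j (n - 1) x / kbeta N p (n - 1)"

definition D2 :: "nat \<Rightarrow> real \<Rightarrow> real \<Rightarrow> real \<Rightarrow> nat \<Rightarrow> nat \<Rightarrow> real \<Rightarrow> real" where
  "D2 N p lam mu j n x = C1 N p lam mu j (n - 1) x + C2 N p lam mu j n x * (kalpha N p (n - 1) - x)"

definition E2 :: "nat \<Rightarrow> real \<Rightarrow> real \<Rightarrow> real \<Rightarrow> nat \<Rightarrow> nat \<Rightarrow> real \<Rightarrow> real" where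
  "E2 N p lam mu j n x = - F1 N p lam mu j (n - 1) x / kbeta N p (n - 1)"

definition F2 :: "nat \<Rightarrow> real \<Rightarrow> real \<Rightarrow> real \<Rightarrow> nat \<Rightarrow> nat \<Rightarrow> real \<Rightarrow> real" where
  "F2 N p lam mu j n x = E1 N p lam mu j (n - 1) x + E2 N p lam mu j n x * (kalpha N p (n - 1) - x)"

definition Csel where "Csel N p lam mu j i = (if i = (1::nat) then C1 N p lam mu j else C2 N p lam mu j)"
definition Dsel where "Dsel N p lam mu j i = (if i = (1::nat) then D1 N p lam mu j else D2 N p lam mu j)"
definition Esel where "Esel N p lam mu j i = (if i = (1::nat) then E1 N p lam mu j else E2 N p lam mu j)"
definition Fsel where "Fsel N p lam mu j i = (if i = (1::nat) then F1 N p lam mu j else F2 N p lam mu j)"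

definition Theta :: "nat \<Rightarrow> real \<Rightarrow> real \<Rightarrow> real \<Rightarrow> nat \<Rightarrow> nat \<Rightarrow> real \<Rightarrow> real" where
  "Theta N p lam mu j n x =
     x * (C1 N p lam mu j n x * D2 N p lam mu j n x - C2 N p lam mu j n x * D1 N p lam mu j n x)"

definition Lambda :: "nat \<Rightarrow> real \<Rightarrow> real \<Rightarrow> real \<Rightarrow> nat \<Rightarrow> nat \<Rightarrow> nat \<Rightarrow> nat \<Rightarrow> real \<Rightarrow> real" where
  "Lambda N p lam mu j n i k x = (-1) ^ k *
     (Esel N p lam mu j k n x * Dsel N p lam mu j i n x
      - Fsel N p lam mu j k n x * Csel N p lam mu j i n x)"

definition calF :: "nat \<Rightarrow> real \<Rightarrow> real \<Rightarrow> real \<Rightarrow> nat \<Rightarrow> nat \<Rightarrow> real \<Rightarrow> real" where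
  "calF N p lam mu j n x = Theta N p lam mu j n x * Theta N p lam mu j n (x - 1)"

definition calG :: "nat \<Rightarrow> real \<Rightarrow> real \<Rightarrow> real \<Rightarrow> nat \<Rightarrow> nat \<Rightarrow> real \<Rightarrow> real" where
  "calG N p lam mu j n x =
     Theta N p lam mu j n x * (bdiff (Theta N p lam mu j n) x
        + Lambda N p lam mu j n 2 1 (x - 1) + Lambda N p lam mu j n 1 2 x)
     - bdiff (Lambda N p lam mu j n 1 1) x
        * (Theta N p lam mu j n x + Lambda N p lam mu j n 1 2 x) * Theta N p lam mu j n x
        / Lambda N p lam mu j n 1 1 x"

definition calH :: "nat \<Rightarrow> real \<Rightarrow> real \<Rightarrow> real \<Rightarrow> nat \<Rightarrow> nat \<Rightarrow> real \<Rightarrow> real" where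
  "calH N p lam mu j n x =
     Theta N p lam mu j n x * bdiff (Lambda N p lam mu j n 2 1) x
     + Lambda N p lam mu j n 1 2 x * Lambda N p lam mu j n 2 1 x
     - bdiff (Lambda N p lam mu j n 1 1) x * Lambda N p lam mu j n 2 1 x
        * (Theta N p lam mu j n x + Lambda N p lam mu j n 1 2 x)
        / Lambda N p lam mu j n 1 1 x
     - Lambda N p lam mu j n 1 1 (x - 1) * Lambda N p lam mu j n 2 2 x"

definition tF where "tF N p lam mu j n x = calF N p lam mu j n (x + 1)"
definition tG where "tG N p lam mu j n x = calG N p lam mu j n (x + 1) + calH N p lam mu j n (x + 1)"
definition tH where "tH N p lam mu j n x = calH N p lam mu j n (x + 1)"

text \<open>Definedness of Theta_n and Lambda_n(.;i,k) at a point t: all denominators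
  [t-y]_{j+1}, [t-1-y]_{j+1} (y in {0,N}) occurring in A_m, B_m (m = n, n-1) at the
  points t and t-1 are nonzero (the beta's are nonzero automatically).\<close>
definition defined_at :: "nat \<Rightarrow> nat \<Rightarrow> real \<Rightarrow> bool" where
  "defined_at N j t \<longleftrightarrow>
     (\<forall>s\<in>{t, t - 1}. \<forall>y\<in>{0, real N}. ffall (s - y) (j + 1) \<noteq> 0)"

end

theory Submission
  imports Defs "HOL-Analysis.Convex"
begin

(* Write KS_n for the Kravchuk-Sobolev polynomial and K_m for the Kravchuk polynomials.
   The polynomial K_n - lam Phi1 K^(0,j)_(n-1)(x,0) - mu Phi2 K^(0,j)_(n-1)(x,N) is monic of
   degree n and, by the reproducing property of the kernel, Sobolev-orthogonal to all lower
   degrees once Phi1, Phi2 are its j-th differences at 0 and N; the Sobolev form is positive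
   definite on polynomials of degree at most N, so this polynomial is KS_n.
   Christoffel-Darboux turns the kernel into (K_n(x) K_(n-1)(t) - K_(n-1)(x) K_n(t)) / (x - t),
   and a discrete Leibniz rule for the j-th difference of f(t)/(x - t) then gives
   KS_n = C1 K_n + D1 K_(n-1).  The three-term recurrence and
   x (K_m(x) - K_m(x-1)) = m K_m + m p (N-m+1) K_(m-1) express KS_(n-1), x nabla KS_n and
   x nabla KS_(n-1) in the same basis K_n, K_(n-1).  Eliminating the basis by Cramer's rule
   (determinant Theta_n / x) gives a first-order system for (KS_n, KS_(n-1)); eliminating
   KS_(n-1) from it at x and x+1 gives the second-order difference equation. *)

section \<open>Forward differences and falling factorials\<close>

lemma fdiffs_0 [simp]: "fdiffs 0 f = f"
  by (simp add: fdiffs_def)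

lemma fdiffs_Suc: "fdiffs (Suc k) f x = fdiffs k f (x + 1) - fdiffs k f x"
  by (simp add: fdiffs_def fdiff_def)

lemma fdiffs_sum: "fdiffs k (\<lambda>x. \<Sum>i\<in>A. g i x) x = (\<Sum>i\<in>A. fdiffs k (g i) x)"
  by (induction k arbitrary: x) (simp_all add: fdiffs_Suc sum_subtractf)

lemma fdiffs_cmult: "fdiffs k (\<lambda>x. c * f x) x = c * fdiffs k f x"
  by (induction k arbitrary: x) (simp_all add: fdiffs_Suc right_diff_distrib)

lemma fdiffs_diff: "fdiffs k (\<lambda>x. f x - g x) x = fdiffs k f x - fdiffs k g x"
  by (induction k arbitrary: x) (simp_all add: fdiffs_Suc)

lemma fdiffs_cong:
  "(\<And>i. i \<le> k \<Longrightarrow> f (x + real i) = g (x + real i)) \<Longrightarrow> fdiffs k f x = fdiffs k g x"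
proof (induction k arbitrary: x)
  case 0
  then show ?case using 0[of 0] by simp
next
  case (Suc k)
  have "fdiffs k f (x + 1) = fdiffs k g (x + 1)"
    by (rule Suc.IH) (use Suc.prems[of "Suc _"] in \<open>auto simp: algebra_simps\<close>)
  moreover have "fdiffs k f x = fdiffs k g x"
    by (rule Suc.IH) (use Suc.prems in auto)
  ultimately show ?case by (simp add: fdiffs_Suc)
qed

lemma ffall_0 [simp]: "ffall z 0 = 1"
  by (simp add: ffall_def)

lemma ffall_Suc: "ffall z (Suc k) = ffall z k * (z - real k)"
  by (simp add: ffall_def)

lemma ffall_Suc_left: "ffall z (Suc k) = z * ffall (z - 1) k"
  unfolding ffall_def prod.lessThan_Suc_shift by (simp add: algebra_simps)

lemma ffall_eq_0_iff: "ffall z k = 0 \<longleftrightarrow> (\<exists>i<k. z = real i)"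
  by (auto simp: ffall_def)

definition newton_sum :: "(real \<Rightarrow> real) \<Rightarrow> real \<Rightarrow> nat \<Rightarrow> real \<Rightarrow> real" where
  "newton_sum f x j y = (\<Sum>k\<le>j. fdiffs k f y / fact k * ffall (x - y) k)"

lemma newton_sum_Suc:
  "newton_sum f x (Suc j) y = newton_sum f x j y + fdiffs (Suc j) f y / fact (Suc j) * ffall (x - y) (Suc j)"
  by (simp add: newton_sum_def)

lemma newton_sum_step:
  "(x - y) * (newton_sum f x j (y + 1) - newton_sum f x j y)
     = fdiffs (Suc j) f y * ffall (x - y) (Suc j) / fact j"
proof (induction j)
  case 0
  then show ?case by (simp add: newton_sum_def fdiffs_Suc ffall_Suc algebra_simps)
next
  case (Suc j)
  define z where "z = x - y"
  define a where "a = fdiffs (Suc j) f y"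
  define b where "b = fdiffs (Suc (Suc j)) f y"
  define Q where "Q = ffall z (Suc j)"
  have shifted: "fdiffs (Suc j) f (y + 1) = a + b" and "x - (y + 1) = z - 1"
    by (simp_all add: a_def b_def z_def fdiffs_Suc)
  have falling: "z * ffall (z - 1) (Suc j) = Q * (z - real (Suc j))"
    unfolding Q_def by (metis ffall_Suc ffall_Suc_left)
  from shifted have "z * (newton_sum f x (Suc j) (y + 1) - newton_sum f x (Suc j) y)
     = z * (newton_sum f x j (y + 1) - newton_sum f x j y)
       + ((a + b) * (z * ffall (z - 1) (Suc j)) - a * (z * Q)) / fact (Suc j)"
    by (simp add: newton_sum_Suc a_def Q_def z_def algebra_simps add_divide_distrib diff_divide_distrib)
  also have "\<dots> = a * Q / fact j + ((a + b) * (Q * (z - real (Suc j))) - a * (z * Q)) / fact (Suc j)"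
    using Suc.IH by (simp only: falling flip: a_def Q_def z_def)
  also have "\<dots> = b * (Q * (z - real (Suc j))) / fact (Suc j)"
  proof -
    have "a * Q / F + ((a + b) * (Q * (z - k)) - a * (z * Q)) / (k * F) = b * (Q * (z - k)) / (k * F)"
      if "F \<noteq> 0" "k \<noteq> 0" for F k :: real
      using that by (simp add: field_simps)
    from this[of "fact j" "real (Suc j)"] show ?thesis by simp
  qed
  finally show ?case
    by (simp add: b_def Q_def z_def ffall_Suc[of _ "Suc j"])
qed

lemma fdiffs_divide_linear:
  assumes "\<And>i. i \<le> j \<Longrightarrow> x - y \<noteq> real i"
  shows "fdiffs j (\<lambda>t. f t / (x - t)) y = fact j / ffall (x - y) (Suc j) * newton_sum f x j y"
  using assms
proof (induction j arbitrary: y)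
  case 0
  then show ?case by (simp add: newton_sum_def ffall_Suc)
next
  case (Suc j)
  define z where "z = x - y"
  define A where "A = newton_sum f x j (y + 1)"
  define B where "B = newton_sum f x j y"
  define d where "d = fdiffs (Suc j) f y"
  have "ffall (z - 1) (Suc j) \<noteq> 0"
    using Suc.prems[of "Suc _"] by (auto simp: z_def ffall_eq_0_iff algebra_simps)
  moreover have "ffall z (Suc (Suc j)) \<noteq> 0"
    using Suc.prems by (auto simp: z_def ffall_eq_0_iff)
  moreover have "ffall z (Suc (Suc j)) = z * ffall (z - 1) (Suc j)"
    and "ffall z (Suc (Suc j)) = ffall z (Suc j) * (z - real (Suc j))"
    by (rule ffall_Suc_left, rule ffall_Suc)
  moreover have "z * (A - B) * fact j = d * ffall z (Suc j)"
    using newton_sum_step[of x y f j] by (simp add: A_def B_def d_def z_def)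
  moreover have "fdiffs (Suc j) (\<lambda>t. f t / (x - t)) y
      = fact j / ffall (z - 1) (Suc j) * A - fact j / ffall z (Suc j) * B"
    using Suc.IH[of "y + 1"] Suc.IH[of y] Suc.prems
    by (force simp: fdiffs_Suc A_def B_def z_def algebra_simps)
  moreover have "newton_sum f x (Suc j) y = B + d / fact (Suc j) * ffall z (Suc j)"
    by (simp add: newton_sum_Suc B_def d_def z_def)
  moreover have "F / P * A - F / Q * B = k * F / R * (B + d / (k * F) * Q)"
    if "z * P = R" "Q * (z - k) = R" "R \<noteq> 0" "z * (A - B) * F = d * Q" "F \<noteq> 0" "k \<noteq> 0"
    for F P Q R k :: real
  proof -
    have "P \<noteq> 0" "Q \<noteq> 0"
      using that(1-3) by auto
    with that(3,5,6) show ?thesis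
      by (simp add: field_simps) (use that(1,2,4) in algebra)
  qed
  ultimately show ?case
    by (simp add: z_def)
qed

section \<open>Kravchuk polynomials in the basis of rising factorials of -x\<close>

definition negpoch :: "nat \<Rightarrow> real \<Rightarrow> real" where
  "negpoch k x = pochhammer (- x) k"

definition krav_coeff :: "nat \<Rightarrow> real \<Rightarrow> nat \<Rightarrow> nat \<Rightarrow> real" where
  "krav_coeff N p m k = p ^ m * pochhammer (- real N) m *
     (pochhammer (- real m) k / (pochhammer (- real N) k * fact k) * inverse p ^ k)"

lemma krav_eq_coeff_sum: "krav N p m x = (\<Sum>k\<le>m. krav_coeff N p m k * negpoch k x)"
  unfolding krav_def krav_coeff_def negpoch_def sum_distrib_left
  by (rule sum.cong) (auto simp: field_simps)

lemma pochhammer_neg_of_nat_nonzero: "k \<le> N \<Longrightarrow> pochhammer (- real N) k \<noteq> (0::real)"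
  by (auto simp: pochhammer_eq_0_iff)

lemma krav_coeff_eq_0: "m < k \<Longrightarrow> krav_coeff N p m k = 0"
  by (auto simp: krav_coeff_def pochhammer_eq_0_iff)

lemma krav_eq_coeff_sum_upto:
  "m \<le> M \<Longrightarrow> krav N p m x = (\<Sum>k\<le>M. krav_coeff N p m k * negpoch k x)"
  unfolding krav_eq_coeff_sum by (rule sum.mono_neutral_left) (auto simp: krav_coeff_eq_0)

lemma negpoch_0 [simp]: "negpoch 0 x = 1"
  by (simp add: negpoch_def)

lemma negpoch_Suc: "negpoch (Suc k) x = negpoch k x * (real k - x)"
  by (simp add: negpoch_def pochhammer_rec' algebra_simps)

lemma negpoch_Suc_shift: "negpoch (Suc k) x = - x * negpoch k (x - 1)"
  by (simp add: negpoch_def pochhammer_rec algebra_simps)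

lemma negpoch_backward_diff: "x * negpoch k x - x * negpoch k (x - 1) = real k * negpoch k x"
  using negpoch_Suc_shift[of k x] negpoch_Suc[of k x] by (simp add: algebra_simps)

lemma negpoch_forward_diff: "negpoch (Suc k) (x + 1) - negpoch (Suc k) x = - (real k + 1) * negpoch k x"
  using negpoch_Suc_shift[of k "x + 1"] negpoch_Suc[of k x] by (simp add: algebra_simps)

lemma krav_coeff_Suc:
  assumes "k < N" "p \<noteq> 0"
  shows "krav_coeff N p m (Suc k) * ((real k - real N) * (real k + 1) * p)
       = krav_coeff N p m k * (real k - real m)"
proof -
  have W: "pochhammer (- real N) k \<noteq> (0::real)" and d: "- real N + real k \<noteq> 0"
    using assms by (simp_all add: pochhammer_neg_of_nat_nonzero)
  have cancel: "A * (a * X / (d * W * (k1 * F)) * (inverse q * Q)) * (d * k1 * q) = A * (X / (W * F) * Q) * a"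
    if "W \<noteq> 0" "F \<noteq> 0" "q \<noteq> 0" "d \<noteq> 0" "k1 \<noteq> 0" for A X a W d F k1 q Q :: real
    using that by (simp add: field_simps)
  have "krav_coeff N p m (Suc k) * ((real k - real N) * (real k + 1) * p) =
     (p ^ m * pochhammer (- real N) m) * ((- real m + real k) * pochhammer (- real m) k
       / ((- real N + real k) * pochhammer (- real N) k * ((real k + 1) * fact k))
       * (inverse p * inverse p ^ k)) * ((- real N + real k) * (real k + 1) * p)"
    unfolding krav_coeff_def pochhammer_rec'[of "- real N" k] pochhammer_rec'[of "- real m" k] fact_Suc
    by (simp add: algebra_simps)
  also have "\<dots> = (p ^ m * pochhammer (- real N) m)
      * (pochhammer (- real m) k / (pochhammer (- real N) k * fact k) * inverse p ^ k) * (- real m + real k)"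
    by (rule cancel) (use W d assms(2) in auto)
  finally show ?thesis
    by (simp add: krav_coeff_def algebra_simps)
qed

lemma krav_coeff_pred:
  assumes "p \<noteq> 0"
  shows "(real k - real m) * krav_coeff N p m k = real m * p * (real N - real m + 1) * krav_coeff N p (m - 1) k"
proof (cases m)
  case 0
  then show ?thesis by (cases k) (simp_all add: krav_coeff_eq_0)
next
  case (Suc m0)
  have shift: "pochhammer (- real m) k * (- real m + real k) = - real m * pochhammer (- real m0) k"
    using pochhammer_rec'[of "- real m" k] pochhammer_rec[of "- real m" k] by (simp add: Suc algebra_simps)
  have rec: "pochhammer (- real N) m = (- real N + real m0) * pochhammer (- real N) m0"
    by (simp add: Suc pochhammer_rec')
  show ?thesis
  proof (cases "pochhammer (- real N) k = (0::real)")
    case True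
    then show ?thesis by (simp add: krav_coeff_def)
  next
    case False
    have "(real k - real m) * krav_coeff N p m k = p ^ m * pochhammer (- real N) m *
       ((pochhammer (- real m) k * (- real m + real k)) / (pochhammer (- real N) k * fact k) * inverse p ^ k)"
      by (simp add: krav_coeff_def algebra_simps)
    also have "\<dots> = real m * p * (real N - real m + 1) * krav_coeff N p (m - 1) k"
      unfolding shift rec using False assms by (simp add: krav_coeff_def Suc field_simps)
    finally show ?thesis .
  qed
qed

lemma krav_coeff_diag:
  assumes "m \<le> N" "p \<noteq> 0"
  shows "krav_coeff N p m m = (- 1) ^ m"
proof -
  have "pochhammer (- real m) m = (- 1) ^ m * (fact m :: real)"
    by (simp add: pochhammer_minus pochhammer_fact)
  moreover have "pochhammer (- real N) m \<noteq> (0::real)"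
    using assms by (simp add: pochhammer_neg_of_nat_nonzero)
  ultimately show ?thesis
    using assms(2) by (simp add: krav_coeff_def field_simps power_inverse)
qed

lemma krav_coeff_recurrence_0:
  "0 = krav_coeff N p (Suc m) 0 + kalpha N p m * krav_coeff N p m 0 + kbeta N p m * krav_coeff N p (m - 1) 0"
  by (cases m) (simp_all add: krav_coeff_def kalpha_def kbeta_def pochhammer_rec' power_Suc algebra_simps)

(* Below the diagonal the two ratio identities express all four coefficients through
   krav_coeff N p m (Suc i). *)
lemma krav_coeff_recurrence_Suc:
  assumes "i < N" "Suc m \<le> N" "p \<noteq> 0"
  shows "real (Suc i) * krav_coeff N p m (Suc i) - krav_coeff N p m i
       = krav_coeff N p (Suc m) (Suc i) + kalpha N p m * krav_coeff N p m (Suc i)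
         + kbeta N p m * krav_coeff N p (m - 1) (Suc i)"
proof (cases i m rule: linorder_cases)
  case less
  let ?c = "krav_coeff N p"
  have up: "(real i - real m) * ?c (Suc m) (Suc i) = real (Suc m) * p * (real N - real m) * ?c m (Suc i)"
    using krav_coeff_pred[OF assms(3), of "Suc i" "Suc m" N] by simp
  have down: "(real i + 1 - real m) * ?c m (Suc i) = real m * p * (real N - real m + 1) * ?c (m - 1) (Suc i)"
    using krav_coeff_pred[OF assms(3), of "Suc i" m N] by (simp add: add.commute)
  have left: "?c m (Suc i) * ((real i - real N) * (real i + 1) * p) = ?c m i * (real i - real m)"
    using krav_coeff_Suc[OF assms(1,3)] .
  have d: "real i - real m \<noteq> 0"
    using less by simp
  have "kbeta N p m * ?c (m - 1) (Suc i) = (1 - p) * (real m * p * (real N - real m + 1) * ?c (m - 1) (Suc i))"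
    by (simp add: kbeta_def algebra_simps)
  also have "\<dots> = (1 - p) * (real i + 1 - real m) * ?c m (Suc i)"
    by (simp add: down)
  finally have beta: "kbeta N p m * ?c (m - 1) (Suc i) = (1 - p) * (real i + 1 - real m) * ?c m (Suc i)" .
  have u: "?c (Suc m) (Suc i) = real (Suc m) * p * (real N - real m) * ?c m (Suc i) / (real i - real m)"
    using up d by (simp add: eq_divide_eq mult.commute)
  have w: "?c m i = ?c m (Suc i) * ((real i - real N) * (real i + 1) * p) / (real i - real m)"
    using left d by (simp add: eq_divide_eq)
  show ?thesis
    unfolding beta u w kalpha_def using d by (simp add: field_simps)
next
  case equal
  then show ?thesis
    using krav_coeff_diag[of m N p] krav_coeff_diag[of "Suc m" N p] assms by (simp add: krav_coeff_eq_0)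
next
  case greater
  then show ?thesis by (simp add: krav_coeff_eq_0)
qed

lemma sum_atMost_shift_negpoch:
  assumes "c N = 0" "1 \<le> N"
  shows "(\<Sum>k\<le>N. c k * negpoch (Suc k) x) = (\<Sum>k\<le>N. (if k = 0 then 0 else c (k - 1)) * negpoch k x)"
proof -
  obtain N' where N: "N = Suc N'" using assms by (cases N) auto
  have "(\<Sum>k\<le>N. c k * negpoch (Suc k) x) = (\<Sum>k\<le>N'. c k * negpoch (Suc k) x)"
    using assms(1) by (simp add: N)
  also have "\<dots> = (\<Sum>k\<le>N. (if k = 0 then 0 else c (k - 1)) * negpoch k x)"
    unfolding N sum.atMost_Suc_shift by simp
  finally show ?thesis .
qed

lemma krav_recurrence:
  assumes "Suc m \<le> N" "p \<noteq> 0"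
  shows "x * krav N p m x = krav N p (Suc m) x + kalpha N p m * krav N p m x + kbeta N p m * krav N p (m - 1) x"
proof -
  let ?c = "krav_coeff N p"
  have "x * krav N p m x = (\<Sum>k\<le>N. real k * ?c m k * negpoch k x) - (\<Sum>k\<le>N. ?c m k * negpoch (Suc k) x)"
    using assms by (simp add: krav_eq_coeff_sum_upto[of m N] negpoch_Suc sum_distrib_left
        sum_subtractf[symmetric] algebra_simps)
  also have "\<dots> = (\<Sum>k\<le>N. (real k * ?c m k - (if k = 0 then 0 else ?c m (k - 1))) * negpoch k x)"
    using assms sum_atMost_shift_negpoch[of "?c m" N x] krav_coeff_eq_0[of m N N p]
    by (simp add: sum_subtractf[symmetric] algebra_simps)
  also have "\<dots> = (\<Sum>k\<le>N. (?c (Suc m) k + kalpha N p m * ?c m k + kbeta N p m * ?c (m - 1) k) * negpoch k x)"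
  proof (rule sum.cong[OF refl])
    fix k assume "k \<in> {..N}"
    then show "(real k * ?c m k - (if k = 0 then 0 else ?c m (k - 1))) * negpoch k x
        = (?c (Suc m) k + kalpha N p m * ?c m k + kbeta N p m * ?c (m - 1) k) * negpoch k x"
      using krav_coeff_recurrence_0[of N p m] krav_coeff_recurrence_Suc[OF _ assms] by (cases k) auto
  qed
  also have "\<dots> = krav N p (Suc m) x + kalpha N p m * krav N p m x + kbeta N p m * krav N p (m - 1) x"
    using assms by (simp add: krav_eq_coeff_sum_upto[of _ N] sum.distrib sum_distrib_left algebra_simps)
  finally show ?thesis .
qed

lemma krav_0 [simp]: "krav N p 0 x = 1"
  by (simp add: krav_def)

lemma krav_backward_diff:
  assumes "m \<le> N" "p \<noteq> 0"
  shows "x * krav N p m x - x * krav N p m (x - 1)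
       = real m * krav N p m x + real m * p * (real N - real m + 1) * krav N p (m - 1) x"
proof -
  let ?c = "krav_coeff N p"
  have "x * krav N p m x - x * krav N p m (x - 1) = (\<Sum>k\<le>N. ?c m k * (x * negpoch k x - x * negpoch k (x - 1)))"
    using assms by (simp add: krav_eq_coeff_sum_upto[of m N] sum_distrib_left sum_subtractf[symmetric] algebra_simps)
  also have "\<dots> = (\<Sum>k\<le>N. (real k - real m) * ?c m k * negpoch k x + real m * ?c m k * negpoch k x)"
    by (rule sum.cong) (auto simp: negpoch_backward_diff algebra_simps)
  also have "\<dots> = (\<Sum>k\<le>N. real m * p * (real N - real m + 1) * ?c (m - 1) k * negpoch k x + real m * ?c m k * negpoch k x)"
    using krav_coeff_pred[OF assms(2)] by simp
  also have "\<dots> = real m * krav N p m x + real m * p * (real N - real m + 1) * krav N p (m - 1) x"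
    using assms by (simp add: krav_eq_coeff_sum_upto[of _ N] sum.distrib sum_distrib_left mult.assoc)
  finally show ?thesis .
qed

section \<open>Orthogonality\<close>

(* The Kravchuk polynomials are eigenfunctions of this hypergeometric difference operator,
   which is symmetric for the binomial weight. *)
definition krav_op :: "nat \<Rightarrow> real \<Rightarrow> (real \<Rightarrow> real) \<Rightarrow> real \<Rightarrow> real" where
  "krav_op N p f x = p * (real N - x) * (f (x + 1) - f x) + (1 - p) * x * (f (x - 1) - f x)"

lemma krav_op_negpoch:
  "krav_op N p (negpoch k) x = - real k * negpoch k x
     - (if k = 0 then 0 else p * real k * (real N - real (k - 1)) * negpoch (k - 1) x)"
proof (cases k)
  case (Suc i)
  have a: "x * (negpoch (Suc i) (x - 1) - negpoch (Suc i) x) = - (real i + 1) * negpoch (Suc i) x"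
    using negpoch_backward_diff[of x "Suc i"] by (simp add: algebra_simps)
  have b: "(real N - x) * negpoch i x = (real N - real i) * negpoch i x + negpoch (Suc i) x"
    by (simp add: negpoch_Suc algebra_simps)
  have "krav_op N p (negpoch (Suc i)) x = p * (- (real i + 1)) * ((real N - x) * negpoch i x)
      + (1 - p) * (x * (negpoch (Suc i) (x - 1) - negpoch (Suc i) x))"
    unfolding krav_op_def negpoch_forward_diff by (simp add: algebra_simps)
  then show ?thesis
    unfolding a b Suc by (simp add: algebra_simps)
qed (simp add: krav_op_def)

lemma krav_op_sum: "krav_op N p (\<lambda>x. \<Sum>k\<in>A. c k * f k x) x = (\<Sum>k\<in>A. c k * krav_op N p (f k) x)"
  by (simp add: krav_op_def sum_distrib_left sum_subtractf[symmetric] sum.distrib[symmetric] algebra_simps)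

lemma krav_op_krav:
  assumes "m \<le> N" "p \<noteq> 0"
  shows "krav_op N p (krav N p m) x = - real m * krav N p m x"
proof -
  let ?c = "krav_coeff N p m"
  have "krav_op N p (krav N p m) x = (\<Sum>k\<le>N. ?c k * krav_op N p (negpoch k) x)"
  proof -
    have "krav N p m = (\<lambda>x. \<Sum>k\<le>N. ?c k * negpoch k x)"
      using krav_eq_coeff_sum_upto[OF assms(1)] by blast
    then show ?thesis by (simp add: krav_op_sum)
  qed
  also have "\<dots> = (\<Sum>k\<le>N. - real k * ?c k * negpoch k x)
      - (\<Sum>k<N. ?c (Suc k) * p * (real k + 1) * (real N - real k) * negpoch k x)"
  proof -
    have "(\<Sum>k\<le>N. ?c k * krav_op N p (negpoch k) x) = (\<Sum>k\<le>N. - real k * ?c k * negpoch k x)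
        - (\<Sum>k\<le>N. if k = 0 then 0 else ?c k * p * real k * (real N - real (k - 1)) * negpoch (k - 1) x)"
      unfolding krav_op_negpoch by (simp add: sum_subtractf[symmetric] algebra_simps if_distrib cong: if_cong)
    also have "(\<Sum>k\<le>N. if k = 0 then 0 else ?c k * p * real k * (real N - real (k - 1)) * negpoch (k - 1) x)
        = (\<Sum>k<N. ?c (Suc k) * p * (real k + 1) * (real N - real k) * negpoch k x)"
      by (cases N) (simp_all only: sum.atMost_Suc_shift lessThan_Suc_atMost, simp_all add: add.commute)
    finally show ?thesis .
  qed
  also have "(\<Sum>k<N. ?c (Suc k) * p * (real k + 1) * (real N - real k) * negpoch k x)
      = (\<Sum>k\<le>N. (real m - real k) * ?c k * negpoch k x)"
  proof -
    have "?c (Suc k) * p * (real k + 1) * (real N - real k) = (real m - real k) * ?c k" if "k < N" for k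
      using krav_coeff_Suc[OF that assms(2), of m] by (simp add: algebra_simps)
    moreover have "(real m - real N) * ?c N = 0"
      using assms(1) by (cases "m = N") (auto simp: krav_coeff_eq_0)
    ultimately show ?thesis
      by (simp add: lessThan_Suc_atMost[symmetric])
  qed
  also have "(\<Sum>k\<le>N. - real k * ?c k * negpoch k x) - (\<Sum>k\<le>N. (real m - real k) * ?c k * negpoch k x)
      = - real m * krav N p m x"
    using assms by (simp add: krav_eq_coeff_sum_upto[of m N] sum_distrib_left
        sum_negf[symmetric] sum_subtractf[symmetric] sum.distrib[symmetric] algebra_simps)
  finally show ?thesis .
qed

definition binom_inner :: "nat \<Rightarrow> real \<Rightarrow> (real \<Rightarrow> real) \<Rightarrow> (real \<Rightarrow> real) \<Rightarrow> real" where
  "binom_inner N p f g = (\<Sum>x\<le>N. f (real x) * g (real x) * bweight N p x)"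

lemma binom_inner_commute: "binom_inner N p f g = binom_inner N p g f"
  by (simp add: binom_inner_def mult_ac)

lemma knorm2_eq_binom_inner: "knorm2 N p m = binom_inner N p (krav N p m) (krav N p m)"
  by (simp add: knorm2_def binom_inner_def power2_eq_square)

lemma bweight_Suc:
  assumes "y < N"
  shows "bweight N p (Suc y) * (1 - p) * (real y + 1) = bweight N p y * p * (real N - real y)"
proof -
  have "(N choose Suc y) * Suc y = (N choose y) * (N - y)"
    using binomial_absorption[of y N] binomial_absorb_comp[of N y] by (simp add: mult.commute)
  then have "real (N choose Suc y) * real (Suc y) = real (N choose y) * real (N - y)"
    by (metis of_nat_mult)
  then have binom: "real (N choose Suc y) * (real y + 1) = real (N choose y) * (real N - real y)"
    using assms by (simp add: of_nat_diff add.commute)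
  have e: "N - y = Suc (N - Suc y)"
    using assms by simp
  have "bweight N p (Suc y) * (1 - p) * (real y + 1)
      = (real (N choose Suc y) * (real y + 1)) * (p * p ^ y) * ((1 - p) * (1 - p) ^ (N - Suc y))"
    unfolding bweight_def by (simp add: mult_ac)
  also have "\<dots> = bweight N p y * p * (real N - real y)"
    unfolding binom bweight_def e by (simp add: mult_ac)
  finally show ?thesis .
qed

lemma binom_inner_krav_op:
  assumes "1 \<le> N"
  shows "binom_inner N p (krav_op N p f) g
       = (\<Sum>x\<le>N. bweight N p x * p * (real N - real x) * f (real x + 1) * g (real x))
       + (\<Sum>x\<le>N. bweight N p x * p * (real N - real x) * g (real x + 1) * f (real x))
       - (\<Sum>x\<le>N. bweight N p x * (p * (real N - real x) + (1 - p) * real x) * f (real x) * g (real x))"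
proof -
  obtain N' where N: "N = Suc N'"
    using assms by (cases N) auto
  have "(\<Sum>x\<le>N. bweight N p x * (1 - p) * real x * f (real x - 1) * g (real x))
      = (\<Sum>y\<le>N'. bweight N p (Suc y) * (1 - p) * (real y + 1) * f (real y) * g (real y + 1))"
    unfolding N sum.atMost_Suc_shift by (simp add: add.commute)
  also have "\<dots> = (\<Sum>y\<le>N'. bweight N p y * p * (real N - real y) * g (real y + 1) * f (real y))"
    by (rule sum.cong[OF refl]) (use bweight_Suc[of _ N p] N in \<open>auto simp: mult_ac\<close>)
  also have "\<dots> = (\<Sum>x\<le>N. bweight N p x * p * (real N - real x) * g (real x + 1) * f (real x))"
    by (simp add: N)
  finally have shift: "(\<Sum>x\<le>N. bweight N p x * (1 - p) * real x * f (real x - 1) * g (real x))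
      = (\<Sum>x\<le>N. bweight N p x * p * (real N - real x) * g (real x + 1) * f (real x))" .
  have "binom_inner N p (krav_op N p f) g
      = (\<Sum>x\<le>N. bweight N p x * p * (real N - real x) * f (real x + 1) * g (real x))
      + (\<Sum>x\<le>N. bweight N p x * (1 - p) * real x * f (real x - 1) * g (real x))
      - (\<Sum>x\<le>N. bweight N p x * (p * (real N - real x) + (1 - p) * real x) * f (real x) * g (real x))"
    unfolding binom_inner_def krav_op_def sum.distrib[symmetric] sum_subtractf[symmetric]
    by (rule sum.cong) (simp_all add: algebra_simps)
  then show ?thesis
    unfolding shift .
qed

lemma binom_inner_krav_op_sym:
  "1 \<le> N \<Longrightarrow> binom_inner N p (krav_op N p f) g = binom_inner N p f (krav_op N p g)"
  by (simp add: binom_inner_krav_op binom_inner_commute[of N p f] mult_ac)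

lemma krav_orthogonal:
  assumes "m \<le> N" "k \<le> N" "m \<noteq> k" "p \<noteq> 0"
  shows "binom_inner N p (krav N p m) (krav N p k) = 0"
proof -
  have "1 \<le> N"
    using assms by linarith
  have "- real m * binom_inner N p (krav N p m) (krav N p k) = binom_inner N p (krav_op N p (krav N p m)) (krav N p k)"
    using krav_op_krav[OF assms(1,4)] by (simp add: binom_inner_def sum_distrib_left mult_ac)
  also have "\<dots> = binom_inner N p (krav N p m) (krav_op N p (krav N p k))"
    by (rule binom_inner_krav_op_sym) fact
  also have "\<dots> = - real k * binom_inner N p (krav N p m) (krav N p k)"
    using krav_op_krav[OF assms(2,4)] by (simp add: binom_inner_def sum_distrib_left mult_ac)
  finally show ?thesis
    using assms(3) by simp
qed

lemma binom_inner_add_right: "binom_inner N p f (\<lambda>x. g x + h x) = binom_inner N p f g + binom_inner N p f h"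
  by (simp add: binom_inner_def sum.distrib algebra_simps)

lemma binom_inner_diff_left: "binom_inner N p (\<lambda>x. f x - g x) h = binom_inner N p f h - binom_inner N p g h"
  by (simp add: binom_inner_def sum_subtractf algebra_simps)

lemma binom_inner_cmult_right: "binom_inner N p f (\<lambda>x. c * g x) = c * binom_inner N p f g"
  by (simp add: binom_inner_def sum_distrib_left mult_ac)

lemma binom_inner_cmult_left: "binom_inner N p (\<lambda>x. c * f x) g = c * binom_inner N p f g"
  by (simp add: binom_inner_def sum_distrib_left mult_ac)

lemma binom_inner_sum_right:
  "binom_inner N p f (\<lambda>x. \<Sum>k\<in>A. a k * g k x) = (\<Sum>k\<in>A. a k * binom_inner N p f (g k))"
  unfolding binom_inner_def by (simp add: sum_distrib_left sum_distrib_right mult_ac sum.swap[of _ A])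

lemma binom_inner_sum_left:
  "binom_inner N p (\<lambda>x. \<Sum>k\<in>A. a k * g k x) f = (\<Sum>k\<in>A. a k * binom_inner N p (g k) f)"
  unfolding binom_inner_def by (simp add: sum_distrib_left sum_distrib_right mult_ac sum.swap[of _ A])

lemma knorm2_eq_kbeta_mult:
  assumes "1 \<le> m" "Suc m \<le> N" "p \<noteq> 0"
  shows "knorm2 N p m = kbeta N p m * knorm2 N p (m - 1)"
proof -
  let ?K = "krav N p" and ?ip = "binom_inner N p"
  have lower: "?K m = (\<lambda>x. x * ?K (m - 1) x - kalpha N p (m - 1) * ?K (m - 1) x - kbeta N p (m - 1) * ?K (m - 1 - 1) x)"
    using krav_recurrence[of "m - 1" N p] assms by (simp add: fun_eq_iff)
  have upper: "(\<lambda>x. x * ?K m x) = (\<lambda>x. ?K (Suc m) x + kalpha N p m * ?K m x + kbeta N p m * ?K (m - 1) x)"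
    using krav_recurrence[of m N p] assms by (simp add: fun_eq_iff)
  have orth: "?ip (?K i) (?K k) = 0" if "i \<le> N" "k \<le> N" "i \<noteq> k" for i k
    using krav_orthogonal[OF that assms(3)] .
  have "knorm2 N p m = ?ip (\<lambda>x. x * ?K (m - 1) x - kalpha N p (m - 1) * ?K (m - 1) x
      - kbeta N p (m - 1) * ?K (m - 1 - 1) x) (?K m)"
    unfolding knorm2_eq_binom_inner by (rule arg_cong[where f = "\<lambda>f. ?ip f (?K m)"]) (rule lower)
  also have "\<dots> = ?ip (\<lambda>x. x * ?K (m - 1) x) (?K m)"
    using orth[of "m - 1" m] orth[of "m - 1 - 1" m] assms
    by (simp add: binom_inner_diff_left binom_inner_cmult_left)
  also have "\<dots> = ?ip (?K (m - 1)) (\<lambda>x. x * ?K m x)"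
    by (simp add: binom_inner_def mult_ac)
  also have "\<dots> = kbeta N p m * knorm2 N p (m - 1)"
    using orth[of "m - 1" "Suc m"] orth[of "m - 1" m] assms
    unfolding upper by (simp add: binom_inner_add_right binom_inner_cmult_right knorm2_eq_binom_inner)
  finally show ?thesis .
qed

lemma kbeta_pos: "1 \<le> m \<Longrightarrow> m \<le> N \<Longrightarrow> 0 < p \<Longrightarrow> p < 1 \<Longrightarrow> 0 < kbeta N p m"
  by (simp add: kbeta_def)

lemma bweight_pos: "x \<le> N \<Longrightarrow> 0 < p \<Longrightarrow> p < 1 \<Longrightarrow> 0 < bweight N p x"
  by (simp add: bweight_def)

lemma knorm2_pos:
  assumes "m < N" "0 < p" "p < 1"
  shows "0 < knorm2 N p m"
  using assms(1)
proof (induction m)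
  case 0
  have "0 < (\<Sum>x\<le>N. bweight N p x)"
    by (rule sum_pos2[of _ 0]) (use bweight_pos[of _ N p] assms in \<open>auto intro: less_imp_le\<close>)
  then show ?case
    by (simp add: knorm2_def)
next
  case (Suc m)
  then show ?case
    using knorm2_eq_kbeta_mult[of "Suc m" N p] kbeta_pos[of "Suc m" N p] assms by simp
qed

section \<open>Polynomial form and the reproducing kernel\<close>

fun negpoch_poly :: "nat \<Rightarrow> real poly" where
  "negpoch_poly 0 = 1"
| "negpoch_poly (Suc k) = negpoch_poly k * [:real k, -1:]"

lemma poly_negpoch_poly: "poly (negpoch_poly k) x = negpoch k x"
  by (induction k) (simp_all add: negpoch_Suc algebra_simps)

lemma lead_coeff_negpoch_poly: "lead_coeff (negpoch_poly k) = (- 1) ^ k"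
proof (induction k)
  case (Suc k)
  then show ?case
    by (simp only: negpoch_poly.simps lead_coeff_mult) simp
qed simp

lemma degree_negpoch_poly: "degree (negpoch_poly k) = k"
proof (induction k)
  case (Suc k)
  have "negpoch_poly k \<noteq> 0" "[:real k, -1:] \<noteq> 0"
    using lead_coeff_negpoch_poly[of k] by auto
  from degree_mult_eq[OF this] show ?case
    using Suc.IH by simp
qed simp

definition krav_poly :: "nat \<Rightarrow> real \<Rightarrow> nat \<Rightarrow> real poly" where
  "krav_poly N p m = (\<Sum>k\<le>m. smult (krav_coeff N p m k) (negpoch_poly k))"

lemma poly_krav_poly: "poly (krav_poly N p m) x = krav N p m x"
  by (simp add: krav_poly_def poly_sum poly_negpoch_poly krav_eq_coeff_sum)

lemma degree_krav_poly_le: "degree (krav_poly N p m) \<le> m"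
  unfolding krav_poly_def
  by (rule degree_sum_le) (auto intro: order.trans[OF degree_smult_le] simp: degree_negpoch_poly)

lemma coeff_krav_poly_top:
  assumes "m \<le> N" "p \<noteq> 0"
  shows "coeff (krav_poly N p m) m = 1"
proof -
  have "coeff (krav_poly N p m) m = (\<Sum>k\<le>m. krav_coeff N p m k * coeff (negpoch_poly k) m)"
    by (simp add: krav_poly_def coeff_sum)
  also have "\<dots> = krav_coeff N p m m * coeff (negpoch_poly m) m"
    by (subst sum.mono_neutral_right[of "{..m}" "{m}"]) (auto intro!: coeff_eq_0 simp: degree_negpoch_poly)
  also have "\<dots> = 1"
    using krav_coeff_diag[OF assms] lead_coeff_negpoch_poly[of m] by (simp add: degree_negpoch_poly flip: power_add)
  finally show ?thesis .
qed

lemma degree_krav_poly: "m \<le> N \<Longrightarrow> p \<noteq> 0 \<Longrightarrow> degree (krav_poly N p m) = m"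
  using degree_krav_poly_le[of N p m] coeff_krav_poly_top[of m N p] le_degree[of "krav_poly N p m" m] by force

lemma poly_in_krav_span:
  assumes "p \<noteq> 0"
  shows "n \<le> Suc N \<Longrightarrow> degree r < n \<Longrightarrow> \<exists>a. \<forall>x. poly r x = (\<Sum>k<n. a k * krav N p k x)"
proof (induction n arbitrary: r)
  case (Suc n)
  define r' where "r' = r - smult (coeff r n) (krav_poly N p n)"
  have "degree r' \<le> n"
    unfolding r'_def using Suc.prems degree_krav_poly_le[of N p n]
    by (intro degree_diff_le) (auto intro: order.trans[OF degree_smult_le])
  moreover have "coeff r' n = 0"
    unfolding r'_def using coeff_krav_poly_top[of n N p] Suc.prems assms by simp
  ultimately have "r' = 0 \<or> degree r' < n"
    by (metis le_neq_implies_less leading_coeff_0_iff)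
  then have "\<exists>a. \<forall>x. poly r' x = (\<Sum>k<n. a k * krav N p k x)"
    using Suc.IH[of r'] Suc.prems by (auto intro: exI[of _ "\<lambda>_. 0"])
  then obtain a where a: "\<And>x. poly r' x = (\<Sum>k<n. a k * krav N p k x)"
    by blast
  have "poly r x = (\<Sum>k<Suc n. (a(n := coeff r n)) k * krav N p k x)" for x
    using a[of x] by (simp add: r'_def poly_krav_poly)
  then show ?case
    by blast
qed simp

lemma binom_inner_krav_poly_lower:
  assumes "m \<le> N" "degree r < m" "0 < p"
  shows "binom_inner N p (krav N p m) (poly r) = 0"
proof -
  obtain a where "\<And>x. poly r x = (\<Sum>k<m. a k * krav N p k x)"
    using poly_in_krav_span[of p m N r] assms by auto
  then have "poly r = (\<lambda>x. \<Sum>k<m. a k * krav N p k x)"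
    by blast
  then show ?thesis
    using krav_orthogonal[of m N _ p] assms by (simp add: binom_inner_sum_right)
qed

lemma krav_christoffel_darboux:
  assumes "Suc m \<le> N" "0 < p" "p < 1"
  shows "(x - y) * (\<Sum>k\<le>m. krav N p k x * krav N p k y / knorm2 N p k)
     = (krav N p (Suc m) x * krav N p m y - krav N p m x * krav N p (Suc m) y) / knorm2 N p m"
  using assms(1)
proof (induction m)
  case 0
  have "krav N p 1 x = x - kalpha N p 0" "krav N p 1 y = y - kalpha N p 0"
    using krav_recurrence[of 0 N p x] krav_recurrence[of 0 N p y] 0 assms
    by (simp_all add: kbeta_def algebra_simps)
  moreover have "knorm2 N p 0 \<noteq> 0"
    using knorm2_pos[of 0 N p] 0 assms by simp
  ultimately show ?case
    by (simp add: field_simps)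
next
  case (Suc m)
  let ?K = "krav N p"
  have pos: "0 < knorm2 N p m" "0 < kbeta N p (Suc m)"
    using knorm2_pos[of m N p] kbeta_pos[of "Suc m" N p] Suc assms by simp_all
  have norm: "knorm2 N p (Suc m) = kbeta N p (Suc m) * knorm2 N p m"
    using knorm2_eq_kbeta_mult[of "Suc m" N p] Suc assms by simp
  have rec: "?K (Suc (Suc m)) t = (t - kalpha N p (Suc m)) * ?K (Suc m) t - kbeta N p (Suc m) * ?K m t" for t
    using krav_recurrence[of "Suc m" N p t] Suc assms by (simp add: algebra_simps)
  have "(x - y) * (\<Sum>k\<le>Suc m. ?K k x * ?K k y / knorm2 N p k)
      = (x - y) * (\<Sum>k\<le>m. ?K k x * ?K k y / knorm2 N p k)
        + (x - y) * (?K (Suc m) x * ?K (Suc m) y) / (kbeta N p (Suc m) * knorm2 N p m)"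
    by (simp add: norm distrib_left)
  also have "\<dots> = (?K (Suc m) x * ?K m y - ?K m x * ?K (Suc m) y) / knorm2 N p m
        + (x - y) * (?K (Suc m) x * ?K (Suc m) y) / (kbeta N p (Suc m) * knorm2 N p m)"
    using Suc by simp
  also have "\<dots> = (?K (Suc (Suc m)) x * ?K (Suc m) y - ?K (Suc m) x * ?K (Suc (Suc m)) y)
      / (kbeta N p (Suc m) * knorm2 N p m)"
    unfolding rec using pos by (simp add: field_simps)
  finally show ?case
    by (simp add: norm)
qed

definition kernel_poly :: "nat \<Rightarrow> real \<Rightarrow> nat \<Rightarrow> nat \<Rightarrow> real \<Rightarrow> real poly" where
  "kernel_poly N p m j y = (\<Sum>k\<le>m. smult (fdiffs j (krav N p k) y / knorm2 N p k) (krav_poly N p k))"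

lemma poly_kernel_poly: "poly (kernel_poly N p m j y) x = kker N p m 0 j x y"
  by (simp add: kernel_poly_def kker_def poly_sum poly_krav_poly mult_ac)

lemma degree_kernel_poly: "degree (kernel_poly N p m j y) \<le> m"
  unfolding kernel_poly_def
  by (rule degree_sum_le) (auto intro: order.trans[OF degree_smult_le] order.trans[OF degree_krav_poly_le])

lemma fdiffs_kker_left: "fdiffs i (\<lambda>x. kker N p m 0 l x y) x0 = kker N p m i l x0 y"
proof -
  have "(\<lambda>x. kker N p m 0 l x y) = (\<lambda>x. \<Sum>k\<le>m. (fdiffs l (krav N p k) y / knorm2 N p k) * krav N p k x)"
    by (simp add: kker_def fun_eq_iff mult_ac)
  then show ?thesis
    by (simp only: fdiffs_sum fdiffs_cmult) (simp add: kker_def mult_ac)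
qed

lemma kker_reproducing_krav:
  assumes "i < n" "n \<le> N" "0 < p" "p < 1"
  shows "binom_inner N p (\<lambda>x. kker N p (n - 1) 0 j x y) (krav N p i) = fdiffs j (krav N p i) y"
proof -
  let ?K = "krav N p"
  have "(\<lambda>x. kker N p (n - 1) 0 j x y) = (\<lambda>x. \<Sum>k\<le>n - 1. (fdiffs j (?K k) y / knorm2 N p k) * ?K k x)"
    by (simp add: kker_def fun_eq_iff mult_ac)
  then have "binom_inner N p (\<lambda>x. kker N p (n - 1) 0 j x y) (?K i)
      = (\<Sum>k\<le>n - 1. fdiffs j (?K k) y / knorm2 N p k * binom_inner N p (?K k) (?K i))"
    by (simp only: binom_inner_sum_left)
  also have "\<dots> = (\<Sum>k\<le>n - 1. if k = i then fdiffs j (?K i) y else 0)"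
    using assms knorm2_pos[of i N p] krav_orthogonal[of _ N i p]
    by (intro sum.cong) (auto simp: knorm2_eq_binom_inner[symmetric])
  also have "\<dots> = fdiffs j (?K i) y"
    using assms(1) by simp
  finally show ?thesis .
qed

lemma kker_reproducing:
  assumes "n \<le> N" "degree r < n" "0 < p" "p < 1"
  shows "binom_inner N p (\<lambda>x. kker N p (n - 1) 0 j x y) (poly r) = fdiffs j (poly r) y"
proof -
  obtain a where "\<And>x. poly r x = (\<Sum>k<n. a k * krav N p k x)"
    using poly_in_krav_span[of p n N r] assms by auto
  then have "poly r = (\<lambda>x. \<Sum>k<n. a k * krav N p k x)"
    by blast
  then show ?thesis
    using kker_reproducing_krav[OF _ assms(1,3,4)] by (simp add: binom_inner_sum_right fdiffs_sum fdiffs_cmult)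
qed

(* By Christoffel-Darboux, kker (n - 1) 0 j x y is the j-th difference in t at y of
   (K_n(x) K_(n-1)(t) - K_(n-1)(x) K_n(t)) / (h_(n-1) (x - t)); the Leibniz rule
   fdiffs_divide_linear produces exactly the sums in Ascr and Bscr. *)
lemma kker_eq_Ascr_Bscr:
  assumes "1 \<le> n" "n \<le> N" "0 < p" "p < 1" "ffall (x - y) (Suc j) \<noteq> 0"
  shows "kker N p (n - 1) 0 j x y = Ascr N p j n x y * krav N p n x + Bscr N p j n x y * krav N p (n - 1) x"
proof -
  let ?K = "krav N p" and ?h = "knorm2 N p (n - 1)"
  define F where "F t = ?K n x * ?K (n - 1) t - ?K (n - 1) x * ?K n t" for t
  have off: "x - y \<noteq> real i" if "i \<le> j" for i
    using assms(5) that by (auto simp: ffall_eq_0_iff)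
  have "fdiffs j (\<lambda>t. \<Sum>k\<le>n - 1. ?K k x / knorm2 N p k * ?K k t) y
      = (\<Sum>k\<le>n - 1. ?K k x / knorm2 N p k * fdiffs j (?K k) y)"
    by (simp only: fdiffs_sum fdiffs_cmult)
  then have "kker N p (n - 1) 0 j x y = fdiffs j (\<lambda>t. \<Sum>k\<le>n - 1. ?K k x / knorm2 N p k * ?K k t) y"
    by (simp add: kker_def)
  also have "\<dots> = fdiffs j (\<lambda>t. 1 / ?h * (F t / (x - t))) y"
  proof (rule fdiffs_cong)
    fix i assume "i \<le> j"
    then have nz: "x - (y + real i) \<noteq> 0"
      using off[of i] by simp
    have "(x - (y + real i)) * (\<Sum>k\<le>n - 1. ?K k x * ?K k (y + real i) / knorm2 N p k) = F (y + real i) / ?h"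
      using krav_christoffel_darboux[of "n - 1" N p x "y + real i"] assms by (simp add: F_def)
    then have "(\<Sum>k\<le>n - 1. ?K k x * ?K k (y + real i) / knorm2 N p k) = F (y + real i) / ?h / (x - (y + real i))"
      using nz by (subst nonzero_eq_divide_eq) (simp_all add: mult.commute)
    then show "(\<Sum>k\<le>n - 1. ?K k x / knorm2 N p k * ?K k (y + real i)) = 1 / ?h * (F (y + real i) / (x - (y + real i)))"
      by (simp add: mult_ac)
  qed
  also have "\<dots> = 1 / ?h * (fact j / ffall (x - y) (Suc j) * newton_sum F x j y)"
    by (simp only: fdiffs_cmult fdiffs_divide_linear[OF off])
  also have "\<dots> = Ascr N p j n x y * ?K n x + Bscr N p j n x y * ?K (n - 1) x"
  proof -
    have dF: "fdiffs k F y = ?K n x * fdiffs k (?K (n - 1)) y - ?K (n - 1) x * fdiffs k (?K n) y" for k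
      unfolding F_def by (simp add: fdiffs_diff fdiffs_cmult)
    have T: "newton_sum F x j y = ?K n x * (\<Sum>k\<le>j. fdiffs k (?K (n - 1)) y / fact k * ffall (x - y) k)
        - ?K (n - 1) x * (\<Sum>k\<le>j. fdiffs k (?K n) y / fact k * ffall (x - y) k)"
      unfolding newton_sum_def dF by (simp add: sum_distrib_left sum_subtractf[symmetric] algebra_simps diff_divide_distrib)
    show ?thesis
      unfolding T Ascr_def Bscr_def by (simp add: algebra_simps)
  qed
  finally show ?thesis .
qed

section \<open>The Kravchuk-Sobolev polynomials\<close>

lemma sip_diff_left:
  fixes f g :: "real poly"
  shows "sip N p lam mu j (f - g) r = sip N p lam mu j f r - sip N p lam mu j g r"
proof -
  have "poly (f - g) = (\<lambda>x. poly f x - poly g x)"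
    by (simp add: fun_eq_iff)
  then show ?thesis
    by (simp add: sip_def fdiffs_diff sum_subtractf algebra_simps)
qed

lemma sip_self_eq_0_imp_eq_0:
  assumes "sip N p lam mu j d d = 0" "degree d \<le> N" "0 < p" "p < 1" "0 < lam" "0 < mu"
  shows "d = 0"
proof (rule ccontr)
  assume "d \<noteq> 0"
  let ?S = "\<Sum>x\<le>N. poly d (real x) * poly d (real x) * bweight N p x"
  have terms_nonneg: "\<And>x. x \<in> {..N} \<Longrightarrow> 0 \<le> poly d (real x) * poly d (real x) * bweight N p x"
    using bweight_pos[of _ N p] assms by (intro mult_nonneg_nonneg zero_le_square less_imp_le) auto
  have "0 \<le> ?S"
    using terms_nonneg by (rule sum_nonneg)
  moreover have "0 \<le> lam * fdiffs j (poly d) 0 * fdiffs j (poly d) 0"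
    "0 \<le> mu * fdiffs j (poly d) (real N) * fdiffs j (poly d) (real N)"
    using assms(5,6) by (simp_all add: mult.assoc)
  ultimately have "?S = 0"
    using assms(1) unfolding sip_def by linarith
  then have "\<forall>x\<in>{..N}. poly d (real x) * poly d (real x) * bweight N p x = 0"
    using terms_nonneg by (subst sum_nonneg_eq_0_iff[symmetric]) auto
  then have "\<And>x. x \<le> N \<Longrightarrow> poly d (real x) = 0"
    using bweight_pos[of _ N p] assms by fastforce
  then have "real ` {..N} \<subseteq> {x. poly d x = 0}"
    by auto
  then have "card (real ` {..N}) \<le> card {x. poly d x = 0}"
    by (rule card_mono[OF poly_roots_finite[OF \<open>d \<noteq> 0\<close>]])
  also have "\<dots> \<le> degree d"
    by (rule card_poly_roots_bound[OF \<open>d \<noteq> 0\<close>])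
  finally show False
    using assms(2) by (simp add: card_image)
qed

(* Phi1 and Phi2 solve the linear system characterising the j-th differences of KS_n at
   0 and N; its determinant is deltaS. *)
lemma solve_2x2_system:
  fixes d0 dN a b c e lam mu D :: real
  assumes "D \<noteq> 0" "D = (1 + lam * a) * (1 + mu * e) - lam * mu * b * c"
  shows "d0 - lam * ((d0 * (1 + mu * e) - mu * b * dN) / D) * a - mu * (((1 + lam * a) * dN - lam * c * d0) / D) * b
         = (d0 * (1 + mu * e) - mu * b * dN) / D"
    and "dN - lam * ((d0 * (1 + mu * e) - mu * b * dN) / D) * c - mu * (((1 + lam * a) * dN - lam * c * d0) / D) * e
         = ((1 + lam * a) * dN - lam * c * d0) / D"
proof -
  let ?X = "d0 * (1 + mu * e) - mu * b * dN" and ?Y = "(1 + lam * a) * dN - lam * c * d0"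
  have X: "?X / D * D = ?X" and Y: "?Y / D * D = ?Y"
    using assms(1) by simp_all
  have "(d0 - lam * (?X / D) * a - mu * (?Y / D) * b) * D = d0 * D - lam * a * (?X / D * D) - mu * b * (?Y / D * D)"
    by (simp add: algebra_simps)
  also have "\<dots> = ?X"
    unfolding X Y by (simp add: assms(2) algebra_simps)
  finally show "d0 - lam * (?X / D) * a - mu * (?Y / D) * b = ?X / D"
    using assms(1) by (simp add: nonzero_eq_divide_eq)
  have "(dN - lam * (?X / D) * c - mu * (?Y / D) * e) * D = dN * D - lam * c * (?X / D * D) - mu * e * (?Y / D * D)"
    by (simp add: algebra_simps)
  also have "\<dots> = ?Y"
    unfolding X Y by (simp add: assms(2) algebra_simps)
  finally show "dN - lam * (?X / D) * c - mu * (?Y / D) * e = ?Y / D"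
    using assms(1) by (simp add: nonzero_eq_divide_eq)
qed

lemma defined_atD:
  assumes "defined_at N j t"
  shows "ffall t (Suc j) \<noteq> 0" "ffall (t - real N) (Suc j) \<noteq> 0"
    "ffall (t - 1) (Suc j) \<noteq> 0" "ffall (t - 1 - real N) (Suc j) \<noteq> 0"
  using assms by (auto simp: defined_at_def)

(* The three-term recurrence rewrites c K_(m-1) + d K_(m-2) in the basis K_m, K_(m-1);
   this is the origin of the formulas for C2, D2 and E2, F2. *)
lemma recombine_by_recurrence:
  fixes t v c d Km Km1 Km2 al b ib :: real
  assumes "b * ib = 1" "v = c * Km1 + d * Km2" "t * Km1 = Km + al * Km1 + b * Km2"
  shows "v = (- d * ib) * Km + (c + (- d * ib) * (al - t)) * Km1"
  using assms by algebra

(* The same for x nabla (c K_m + d K_(m-1)), using the backward-difference relations of K_m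
   and K_(m-1); this is the origin of the formulas for E1, F1. *)
lemma recombine_backward_diff_by_recurrence:
  fixes t c c0 d d0 Km Km0 Km1 Km10 Km2 m al b ib q NN :: real
  assumes "b * ib = 1"
    "t * Km - t * Km0 = m * Km + m * q * (NN - m + 1) * Km1"
    "t * Km1 - t * Km10 = (m - 1) * Km1 + (m - 1) * q * (NN - m + 2) * Km2"
    "t * Km1 = Km + al * Km1 + b * Km2"
  shows "t * ((c * Km + d * Km1) - (c0 * Km0 + d0 * Km10)) =
    (t * (c - c0) + m * c0 - (m - 1) * q * (NN - m + 2) * d0 * ib) * Km
    + (t * (d - d0) + m * q * (NN - m + 1) * c0 + (m - 1) * q * (NN - m + 2) * (t - al) * d0 * ib + (m - 1) * d0) * Km1"
  using assms by algebra

(* Cramer's rule eliminating the basis a = K_n, b = K_(n-1); with u = KS_n and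
   v = KS_(n-1) this is the first-order system with coefficients Theta_n and Lambda_n. *)
lemma eliminate_basis_2x2:
  fixes t u u0 v v0 c1 d1 c2 d2 e1 f1 e2 f2 a b :: real
  assumes "u = c1 * a + d1 * b" "v = c2 * a + d2 * b"
    "t * (u - u0) = e1 * a + f1 * b" "t * (v - v0) = e2 * a + f2 * b"
  shows "t * (c1 * d2 - c2 * d1) * (u - u0) = (e1 * d2 - f1 * c2) * u - (e1 * d1 - f1 * c1) * v"
    "t * (c1 * d2 - c2 * d1) * (v - v0) = (e2 * d2 - f2 * c2) * u - (e2 * d1 - f2 * c1) * v"
  using assms by algebra+

(* Solving the first equation at x+1 for v1 (division by L11 = Lambda_n(x+1;1,1)) and the
   second one for v0, the first equation at x becomes free of KS_(n-1). *)
lemma second_order_elimination: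
  fixes T T0 L11 L11' L12 L21 L21' L22 u0 u1 u2 v0 v1 :: real
  assumes "L11 \<noteq> 0"
    and "T * (u2 - u1) = - L21 * u2 + L11 * v1"
    and "T0 * (u1 - u0) = - L21' * u1 + L11' * v0"
    and "T * (v1 - v0) = L22 * u2 - L12 * v1"
  defines "H \<equiv> T * (L21 - L21') + L12 * L21 - (L11 - L11') * L21 * (T + L12) / L11 - L11' * L22"
  shows "T * T0 * ((u2 - u1) - (u1 - u0))
     + (T * ((T - T0) + L21' + L12) - (L11 - L11') * (T + L12) * T / L11 + H) * (u2 - u1) + H * u1 = 0"
proof -
  define r where "r = (L11 - L11') / L11"
  have "r * L11 = L11 - L11'"
    using assms(1) by (simp add: r_def)
  moreover have "(L11 - L11') * (T + L12) * T / L11 = r * (T + L12) * T"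
    and "H = T * (L21 - L21') + L12 * L21 - r * L21 * (T + L12) - L11' * L22"
    by (simp_all add: r_def H_def)
  ultimately show ?thesis
    using assms(2-4) by algebra
qed

locale kravchuk_sobolev =
  fixes N :: nat and p lam mu :: real and j n :: nat
  assumes p_pos: "0 < p" and p_less_1: "p < 1" and lam_pos: "0 < lam" and mu_pos: "0 < mu"
    and n_pos: "1 \<le> n" and n_le_N: "n \<le> N"
begin

abbreviation "kernel_jj x y \<equiv> kker N p (n - 1) j j x y"

lemma deltaS_pos: "0 < deltaS N p lam mu j n"
proof -
  define u where "u k = fdiffs j (krav N p k) 0 / sqrt (knorm2 N p k)" for k
  define v where "v k = fdiffs j (krav N p k) (real N) / sqrt (knorm2 N p k)" for k
  have h_pos: "0 < knorm2 N p k" if "k \<in> {..n - 1}" for k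
    using knorm2_pos[of k N p] that n_pos n_le_N p_pos p_less_1 by auto
  have "kernel_jj 0 0 = (\<Sum>k\<le>n - 1. (u k)\<^sup>2)" "kernel_jj (real N) (real N) = (\<Sum>k\<le>n - 1. (v k)\<^sup>2)"
    "kernel_jj 0 (real N) = (\<Sum>k\<le>n - 1. u k * v k)" "kernel_jj (real N) 0 = (\<Sum>k\<le>n - 1. u k * v k)"
    unfolding kker_def u_def v_def using h_pos
    by (auto intro!: sum.cong simp: power2_eq_square real_sqrt_mult[symmetric] abs_of_pos)
  moreover have "(\<Sum>k\<le>n - 1. u k * v k)\<^sup>2 \<le> (\<Sum>k\<le>n - 1. (u k)\<^sup>2) * (\<Sum>k\<le>n - 1. (v k)\<^sup>2)"
    by (rule Cauchy_Schwarz_ineq_sum)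
  ultimately have "0 \<le> lam * mu * (kernel_jj 0 0 * kernel_jj (real N) (real N) - kernel_jj 0 (real N) * kernel_jj (real N) 0)"
    and "0 \<le> lam * kernel_jj 0 0" "0 \<le> mu * kernel_jj (real N) (real N)"
    using lam_pos mu_pos by (simp_all add: power2_eq_square sum_nonneg)
  then show ?thesis
    unfolding deltaS_def by (simp add: algebra_simps)
qed

definition ks_explicit :: "real poly" where
  "ks_explicit = krav_poly N p n
     - smult (lam * Phi1 N p lam mu j n) (kernel_poly N p (n - 1) j 0)
     - smult (mu * Phi2 N p lam mu j n) (kernel_poly N p (n - 1) j (real N))"

lemma poly_ks_explicit:
  "poly ks_explicit = (\<lambda>x. krav N p n x - lam * Phi1 N p lam mu j n * kker N p (n - 1) 0 j x 0
     - mu * Phi2 N p lam mu j n * kker N p (n - 1) 0 j x (real N))"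
  by (simp add: fun_eq_iff ks_explicit_def poly_kernel_poly poly_krav_poly)

lemma degree_ks_explicit: "degree ks_explicit = n" and lead_coeff_ks_explicit: "lead_coeff ks_explicit = 1"
proof -
  let ?R = "smult (lam * Phi1 N p lam mu j n) (kernel_poly N p (n - 1) j 0)
     + smult (mu * Phi2 N p lam mu j n) (kernel_poly N p (n - 1) j (real N))"
  have split: "ks_explicit = krav_poly N p n - ?R"
    by (simp add: ks_explicit_def)
  have "degree ?R \<le> n - 1"
    by (intro degree_add_le order.trans[OF degree_smult_le] degree_kernel_poly)
  then have low: "degree ?R < n"
    using n_pos by simp
  have top: "degree (krav_poly N p n) = n" "lead_coeff (krav_poly N p n) = 1"
    using degree_krav_poly coeff_krav_poly_top n_le_N p_pos by auto
  have "degree (krav_poly N p n + - ?R) = n"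
    by (subst degree_add_eq_left) (simp_all only: degree_minus top low)
  then show degree: "degree ks_explicit = n"
    by (simp only: split diff_conv_add_uminus)
  have "coeff ?R n = 0"
    using low by (intro coeff_eq_0) simp
  then show "lead_coeff ks_explicit = 1"
    using degree top by (simp add: split)
qed

lemma fdiffs_ks_explicit:
  "fdiffs j (poly ks_explicit) y = fdiffs j (krav N p n) y
     - lam * Phi1 N p lam mu j n * kernel_jj y 0 - mu * Phi2 N p lam mu j n * kernel_jj y (real N)"
  by (simp add: poly_ks_explicit fdiffs_diff fdiffs_cmult fdiffs_kker_left)

lemma fdiffs_ks_explicit_nodes:
  "fdiffs j (poly ks_explicit) 0 = Phi1 N p lam mu j n"
  "fdiffs j (poly ks_explicit) (real N) = Phi2 N p lam mu j n"
  unfolding fdiffs_ks_explicit Phi1_def Phi2_def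
  using deltaS_pos by (simp_all only: solve_2x2_system[OF _ deltaS_def] less_irrefl)

lemma sip_ks_explicit:
  assumes "degree r < n"
  shows "sip N p lam mu j ks_explicit r = 0"
proof -
  have "binom_inner N p (poly ks_explicit) (poly r)
      = - lam * Phi1 N p lam mu j n * fdiffs j (poly r) 0 - mu * Phi2 N p lam mu j n * fdiffs j (poly r) (real N)"
    using kker_reproducing[OF n_le_N assms p_pos p_less_1]
      binom_inner_krav_poly_lower[OF n_le_N assms p_pos]
    by (simp add: poly_ks_explicit binom_inner_diff_left binom_inner_cmult_left)
  then show ?thesis
    by (simp add: sip_def binom_inner_def fdiffs_ks_explicit_nodes)
qed

lemma KS_eq_ks_explicit: "KS N p lam mu j n = ks_explicit"
  unfolding KS_def
proof (rule the_equality)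
  show "lead_coeff ks_explicit = 1 \<and> degree ks_explicit = n \<and> (\<forall>r. degree r < n \<longrightarrow> sip N p lam mu j ks_explicit r = 0)"
    using degree_ks_explicit lead_coeff_ks_explicit sip_ks_explicit by auto
next
  fix q
  assume q: "lead_coeff q = 1 \<and> degree q = n \<and> (\<forall>r. degree r < n \<longrightarrow> sip N p lam mu j q r = 0)"
  let ?d = "q - ks_explicit"
  have "degree ?d \<le> n"
    using q degree_ks_explicit by (intro degree_diff_le) auto
  moreover have "coeff ?d n = 0"
    using q degree_ks_explicit lead_coeff_ks_explicit by (metis coeff_diff diff_self)
  ultimately have "?d = 0 \<or> degree ?d < n"
    by (metis le_neq_implies_less leading_coeff_0_iff)
  moreover have "?d = 0" if "degree ?d < n"
  proof (rule sip_self_eq_0_imp_eq_0)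
    show "sip N p lam mu j ?d ?d = 0"
      using q sip_ks_explicit[OF that] that by (simp add: sip_diff_left)
  qed (use that n_le_N p_pos p_less_1 lam_pos mu_pos in auto)
  ultimately show "q = ks_explicit"
    by auto
qed

lemma poly_KS:
  assumes "ffall x (Suc j) \<noteq> 0" "ffall (x - real N) (Suc j) \<noteq> 0"
  shows "poly (KS N p lam mu j n) x = C1 N p lam mu j n x * krav N p n x + D1 N p lam mu j n x * krav N p (n - 1) x"
  using kker_eq_Ascr_Bscr[OF n_pos n_le_N p_pos p_less_1, of x 0 j]
    kker_eq_Ascr_Bscr[OF n_pos n_le_N p_pos p_less_1, of x "real N" j] assms
  by (simp add: KS_eq_ks_explicit poly_ks_explicit C1_def D1_def algebra_simps)

lemma kbeta_pred_inverse:
  assumes "2 \<le> n"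
  shows "kbeta N p (n - 1) * inverse (kbeta N p (n - 1)) = 1"
proof -
  have "0 < kbeta N p (n - 1)"
    using kbeta_pos[of "n - 1" N p] assms n_le_N p_pos p_less_1 by simp
  then show ?thesis
    by simp
qed

lemma krav_recurrence_pred:
  assumes "2 \<le> n"
  shows "t * krav N p (n - 1) t = krav N p n t + kalpha N p (n - 1) * krav N p (n - 1) t
      + kbeta N p (n - 1) * krav N p (n - 1 - 1) t"
  using krav_recurrence[of "n - 1" N p t] assms n_le_N p_pos by simp

lemma kravchuk_sobolev_pred: "2 \<le> n \<Longrightarrow> kravchuk_sobolev N p lam mu (n - 1)"
  using p_pos p_less_1 lam_pos mu_pos n_le_N by unfold_locales auto

lemma x_bdiff_KS:
  assumes "2 \<le> n" "defined_at N j t"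
  shows "t * (poly (KS N p lam mu j n) t - poly (KS N p lam mu j n) (t - 1))
       = E1 N p lam mu j n t * krav N p n t + F1 N p lam mu j n t * krav N p (n - 1) t"
proof -
  have p: "p \<noteq> 0"
    using p_pos by simp
  have bd_n: "t * krav N p n t - t * krav N p n (t - 1)
      = real n * krav N p n t + real n * p * (real N - real n + 1) * krav N p (n - 1) t"
    using krav_backward_diff[OF n_le_N p] .
  have bd_pred: "t * krav N p (n - 1) t - t * krav N p (n - 1) (t - 1)
      = (real n - 1) * krav N p (n - 1) t + (real n - 1) * p * (real N - real n + 2) * krav N p (n - 1 - 1) t"
    using krav_backward_diff[of "n - 1" N p t] assms(1) n_le_N p by (simp add: of_nat_diff algebra_simps)
  show ?thesis
    unfolding poly_KS[OF defined_atD(1,2)[OF assms(2)]] poly_KS[OF defined_atD(3,4)[OF assms(2)]]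
      E1_def F1_def bdiff_def divide_inverse
    by (rule recombine_backward_diff_by_recurrence[OF kbeta_pred_inverse[OF assms(1)] bd_n bd_pred
        krav_recurrence_pred[OF assms(1)]])
qed

lemma poly_KS_pred:
  assumes "2 \<le> n" "ffall t (Suc j) \<noteq> 0" "ffall (t - real N) (Suc j) \<noteq> 0"
  shows "poly (KS N p lam mu j (n - 1)) t = C2 N p lam mu j n t * krav N p n t + D2 N p lam mu j n t * krav N p (n - 1) t"
proof -
  interpret pred: kravchuk_sobolev N p lam mu j "n - 1"
    using kravchuk_sobolev_pred[OF assms(1)] .
  show ?thesis
    unfolding D2_def C2_def divide_inverse
    by (rule recombine_by_recurrence[OF kbeta_pred_inverse[OF assms(1)] pred.poly_KS[OF assms(2,3)]
          krav_recurrence_pred[OF assms(1)]])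
qed

lemma x_bdiff_KS_pred:
  assumes "3 \<le> n" "defined_at N j t"
  shows "t * (poly (KS N p lam mu j (n - 1)) t - poly (KS N p lam mu j (n - 1)) (t - 1))
       = E2 N p lam mu j n t * krav N p n t + F2 N p lam mu j n t * krav N p (n - 1) t"
proof -
  have n2: "2 \<le> n"
    using assms(1) by simp
  interpret pred: kravchuk_sobolev N p lam mu j "n - 1"
    using kravchuk_sobolev_pred[OF n2] .
  have "2 \<le> n - 1"
    using assms(1) by simp
  show ?thesis
    unfolding F2_def E2_def divide_inverse
    by (rule recombine_by_recurrence[OF kbeta_pred_inverse[OF n2] pred.x_bdiff_KS[OF \<open>2 \<le> n - 1\<close> assms(2)]
          krav_recurrence_pred[OF n2]])
qed

lemma KS_first_order_system:
  assumes "3 \<le> n" "defined_at N j t"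
  defines "u \<equiv> poly (KS N p lam mu j n)" and "v \<equiv> poly (KS N p lam mu j (n - 1))"
  shows "Theta N p lam mu j n t * (u t - u (t - 1))
      = - Lambda N p lam mu j n 2 1 t * u t + Lambda N p lam mu j n 1 1 t * v t"
    and "Theta N p lam mu j n t * (v t - v (t - 1))
      = Lambda N p lam mu j n 2 2 t * u t - Lambda N p lam mu j n 1 2 t * v t"
proof -
  note system = eliminate_basis_2x2[OF poly_KS[OF defined_atD(1,2)[OF assms(2)]]
      poly_KS_pred[OF _ defined_atD(1,2)[OF assms(2)]] x_bdiff_KS[OF _ assms(2)] x_bdiff_KS_pred[OF assms(1,2)]]
  show "Theta N p lam mu j n t * (u t - u (t - 1))
      = - Lambda N p lam mu j n 2 1 t * u t + Lambda N p lam mu j n 1 1 t * v t"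
    using system(1) assms(1) by (simp add: u_def v_def Theta_def Lambda_def Esel_def Fsel_def Csel_def Dsel_def algebra_simps)
  show "Theta N p lam mu j n t * (v t - v (t - 1))
      = Lambda N p lam mu j n 2 2 t * u t - Lambda N p lam mu j n 1 2 t * v t"
    using system(2) assms(1) by (simp add: u_def v_def Theta_def Lambda_def Esel_def Fsel_def Csel_def Dsel_def)
qed

end

theorem mainTheorem8:
  fixes N n j :: nat and p lam mu x :: real
  assumes "0 < p" and "p < 1" and "0 < lam" and "0 < mu"
    and "3 \<le> n" and "n \<le> N"
    and "defined_at N j (x + 1)" and "defined_at N j x"
    and "Lambda N p lam mu j n 1 1 (x + 1) \<noteq> 0"
  shows "tF N p lam mu j n x * fdiff (bdiff (poly (KS N p lam mu j n))) x
       + tG N p lam mu j n x * fdiff (poly (KS N p lam mu j n)) x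
       + tH N p lam mu j n x * poly (KS N p lam mu j n) x = 0"
proof -
  interpret kravchuk_sobolev N p lam mu j n
    using assms by unfold_locales auto
  note at_succ = KS_first_order_system[OF assms(5,7), unfolded add_diff_cancel_right']
  note at_x = KS_first_order_system(1)[OF assms(5,8)]
  show ?thesis
    unfolding tF_def tG_def tH_def calF_def calG_def calH_def fdiff_def bdiff_def add_diff_cancel_right'
    using second_order_elimination[OF assms(9) at_succ(1) at_x at_succ(2)] by (simp add: algebra_simps)
qed

end
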